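(* Let $\mathscr{H}$ be a complex Hilbert space and $A\in\mathbb{B}(\mathscr{H})$. Then $$\frac{1}{4}\, w^2\left(|A|+i|A^*|\right)+\frac{1}{8}\left\||A|^2+|A^*|^2\right\|+\frac{1}{4}\,w\left(|A||A^*|\right)\leq \frac{1}{2}\left\|A^*A+AA^*\right\|.$$
   Context: $\mathbb{B}(\mathscr{H})$ denotes the algebra of bounded linear operators on $\mathscr{H}$; $\|\cdot\|$ is the operator norm. For $T\in\mathbb{B}(\mathscr{H})$, $|T|=(T^*T)^{1/2}$, and $w(T)=\sup\{|\langle Tx,x\rangle|: \|x\|=1\}$ is the numerical radius. *)

theory Defs
  imports "HOL-Analysis.Analysis"
begin

class complex_inner = real_normed_vector +
  fixes scaleC :: "complex \<Rightarrow> 'a \<Rightarrow> 'a"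
    and cinner :: "'a \<Rightarrow> 'a \<Rightarrow> complex"
  assumes scaleC_add_right: "scaleC a (x + y) = scaleC a x + scaleC a y"
    and scaleC_add_left: "scaleC (a + b) x = scaleC a x + scaleC b x"
    and scaleC_scaleC: "scaleC a (scaleC b x) = scaleC (a * b) x"
    and scaleC_one: "scaleC 1 x = x"
    and scaleR_scaleC: "scaleR r x = scaleC (complex_of_real r) x"
    and cinner_commute: "cinner x y = cnj (cinner y x)"
    and cinner_add_left: "cinner (x + y) z = cinner x z + cinner y z"
    and cinner_scaleC_left: "cinner (scaleC c x) y = c * cinner x y"
    and cinner_self_real: "Im (cinner x x) = 0"
    and cinner_self_nonneg: "0 \<le> Re (cinner x x)"
    and cinner_self_eq_zero: "cinner x x = 0 \<longleftrightarrow> x = 0"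
    and norm_eq_sqrt_cinner: "norm x = sqrt (Re (cinner x x))"

class chilbert_space = complex_inner + complete_space

definition bounded_clinear :: "('a::complex_inner \<Rightarrow> 'b::complex_inner) \<Rightarrow> bool" where
  "bounded_clinear T \<longleftrightarrow> bounded_linear T \<and> (\<forall>c x. T (scaleC c x) = scaleC c (T x))"

definition adj :: "('a::chilbert_space \<Rightarrow> 'a) \<Rightarrow> ('a \<Rightarrow> 'a)" where
  "adj T = (THE S. bounded_clinear S \<and> (\<forall>x y. cinner (T x) y = cinner x (S y)))"

definition positive_op :: "('a::chilbert_space \<Rightarrow> 'a) \<Rightarrow> bool" where
  "positive_op S \<longleftrightarrow> bounded_clinear S \<and> (\<forall>x. Im (cinner (S x) x) = 0 \<and> 0 \<le> Re (cinner (S x) x))"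

definition absop :: "('a::chilbert_space \<Rightarrow> 'a) \<Rightarrow> ('a \<Rightarrow> 'a)" where
  "absop T = (THE S. positive_op S \<and> S \<circ> S = adj T \<circ> T)"

text \<open>Numerical radius w(T) = sup {|<Tx,x>| : ||x|| = 1}, written as a supremum of
  |<Tx,x>| / ||x||^2 over all x (value 0 at x = 0), in the style of onorm.\<close>
definition numrad :: "('a::chilbert_space \<Rightarrow> 'a) \<Rightarrow> real" where
  "numrad T = (SUP x. cmod (cinner (T x) x) / (norm x)\<^sup>2)"

end

theory Submission
  imports Defs
begin

text \<open>Put \<open>P = |A|\<close>, \<open>Q = |A\<^sup>*|\<close> and \<open>N = \<parallel>P\<^sup>2 + Q\<^sup>2\<parallel> = \<parallel>A\<^sup>*A + AA\<^sup>*\<parallel>\<close>.  Since \<open>P\<close> and \<open>Q\<close> are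
  self-adjoint, \<open>\<parallel>Px\<parallel>\<^sup>2 + \<parallel>Qx\<parallel>\<^sup>2 = \<langle>(P\<^sup>2 + Q\<^sup>2)x, x\<rangle> \<le> N \<parallel>x\<parallel>\<^sup>2\<close>.  Hence
  \<open>|\<langle>(P + iQ)x, x\<rangle>|\<^sup>2 = \<langle>Px, x\<rangle>\<^sup>2 + \<langle>Qx, x\<rangle>\<^sup>2 \<le> N \<parallel>x\<parallel>\<^sup>4\<close>, i.e. \<open>w\<^sup>2(P + iQ) \<le> N\<close>, and
  \<open>|\<langle>PQx, x\<rangle>| = |\<langle>Qx, Px\<rangle>| \<le> \<parallel>Px\<parallel> \<parallel>Qx\<parallel> \<le> N \<parallel>x\<parallel>\<^sup>2 / 2\<close>, i.e. \<open>w(PQ) \<le> N/2\<close>; the three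
  terms on the left then add up to at most \<open>N/4 + N/8 + N/8 = N/2\<close>.

  Most of the work is to make \<open>|A|\<close> meaningful: adjoints come from the Riesz representation
  theorem, and the positive square root is the limit of a monotone iteration and is
  unique, so that the description of \<open>|A|\<close> by \<open>THE\<close> determines it.\<close>

lemma cinner_add_right: "cinner (x::'a::complex_inner) (y + z) = cinner x y + cinner x z"
  by (simp add: cinner_commute[of x "y+z"] cinner_commute[of x y] cinner_commute[of x z] cinner_add_left)

lemma cinner_scaleC_right: "cinner (x::'a::complex_inner) (scaleC c y) = cnj c * cinner x y"
  by (simp add: cinner_commute[of x "scaleC c y"] cinner_commute[of x y] cinner_scaleC_left)

lemma cinner_zero_left [simp]: "cinner (0::'a::complex_inner) y = 0"
  using cinner_add_left[of "0::'a" 0 y] by simp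

lemma cinner_zero_right [simp]: "cinner (x::'a::complex_inner) 0 = 0"
  using cinner_add_right[of x "0::'a" 0] by simp

lemma cinner_minus_left: "cinner (- x::'a::complex_inner) y = - cinner x y"
  using cinner_add_left[of x "-x" y] by (simp add: add_eq_0_iff2)

lemma cinner_minus_right: "cinner (x::'a::complex_inner) (- y) = - cinner x y"
  using cinner_add_right[of x y "-y"] by (simp add: add_eq_0_iff2)

lemma cinner_diff_left: "cinner (x - y::'a::complex_inner) z = cinner x z - cinner y z"
  using cinner_add_left[of x "-y" z] by (simp add: cinner_minus_left)

lemma cinner_diff_right: "cinner (x::'a::complex_inner) (y - z) = cinner x y - cinner x z"
  using cinner_add_right[of x y "-z"] by (simp add: cinner_minus_right)

lemma cinner_scaleR_left: "cinner (r *\<^sub>R (x::'a::complex_inner)) y = of_real r * cinner x y"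
  by (simp add: scaleR_scaleC cinner_scaleC_left)

lemma cinner_scaleR_right: "cinner (x::'a::complex_inner) (r *\<^sub>R y) = of_real r * cinner x y"
  by (simp add: scaleR_scaleC cinner_scaleC_right)

lemma cinner_self: "cinner (x::'a::complex_inner) x = of_real ((norm x)\<^sup>2)"
proof (rule complex_eqI)
  show "Re (cinner x x) = Re (of_real ((norm x)\<^sup>2))"
    using cinner_self_nonneg[of x] by (simp add: norm_eq_sqrt_cinner)
qed (simp add: cinner_self_real)

lemma Re_cinner_self: "Re (cinner (x::'a::complex_inner) x) = (norm x)\<^sup>2"
  by (simp add: cinner_self)

lemma cinner_eqI: "(\<And>z. cinner (x::'a::complex_inner) z = cinner y z) \<Longrightarrow> x = y"
proof -
  assume "\<And>z. cinner x z = cinner y z"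
  then have "cinner (x - y) (x - y) = 0" by (simp add: cinner_diff_left)
  then show "x = y" by (simp add: cinner_self_eq_zero)
qed

lemma cinner_eqI_right: "(\<And>z. cinner z (x::'a::complex_inner) = cinner z y) \<Longrightarrow> x = y"
  by (rule cinner_eqI) (metis cinner_commute)

lemma scaleC_diff_right: "scaleC c (x - y) = scaleC c x - scaleC c (y::'a::complex_inner)"
  using scaleC_add_right[of c "x - y" y] by simp

lemma norm_scaleC: "norm (scaleC c (x::'a::complex_inner)) = cmod c * norm x"
proof -
  have "complex_of_real ((norm (scaleC c x))\<^sup>2) = c * (cnj c * of_real ((norm x)\<^sup>2))"
    using cinner_scaleC_left[of c x "scaleC c x"] cinner_scaleC_right[of x c x]
    by (simp only: cinner_self)
  also have "\<dots> = of_real ((cmod c * norm x)\<^sup>2)"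
    by (simp only: mult.assoc[symmetric] complex_norm_square[symmetric] power_mult_distrib
        of_real_mult of_real_power)
  finally have "(norm (scaleC c x))\<^sup>2 = (cmod c * norm x)\<^sup>2" using of_real_eq_iff by blast
  then show ?thesis by (simp add: power2_eq_imp_eq)
qed

lemma cmod_cinner_le: "cmod (cinner (x::'a::complex_inner) y) \<le> norm x * norm y"
proof (cases "y = 0")
  case False
  define a where "a = cinner x y"
  define n where "n = (norm y)\<^sup>2"
  define t where "t = a / of_real n"
  have n: "n > 0" using False by (simp add: n_def)
  have "0 \<le> Re (cinner (x - scaleC t y) (x - scaleC t y))" by (rule cinner_self_nonneg)
  also have "cinner (x - scaleC t y) (x - scaleC t y)
      = cinner x x - cnj t * a - t * cnj a + t * cnj t * of_real n"
    by (simp add: cinner_diff_left cinner_diff_right cinner_scaleC_left cinner_scaleC_right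
        cinner_self[of y] cinner_commute[of y x] flip: a_def n_def)
       (simp add: algebra_simps)
  also have "\<dots> = cinner x x - of_real ((cmod a)\<^sup>2 / n)"
    using n by (simp add: t_def field_simps flip: complex_norm_square)
  finally have "(cmod a)\<^sup>2 / n \<le> (norm x)\<^sup>2" by (simp add: cinner_self)
  then have "(cmod a)\<^sup>2 \<le> (norm x * norm y)\<^sup>2"
    using n by (simp add: field_simps n_def)
  then show ?thesis unfolding a_def by (rule power2_le_imp_le) simp
qed simp

lemma Re_cinner_le: "Re (cinner (x::'a::complex_inner) y) \<le> norm x * norm y"
  using complex_Re_le_cmod[of "cinner x y"] cmod_cinner_le[of x y] by linarith

lemma parallelogram_law:
  "(norm (x + y))\<^sup>2 + (norm (x - y))\<^sup>2 = 2 * (norm (x::'a::complex_inner))\<^sup>2 + 2 * (norm y)\<^sup>2"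
proof -
  have "cinner (x + y) (x + y) + cinner (x - y) (x - y) = 2 * cinner x x + 2 * cinner y y"
    by (simp add: cinner_add_left cinner_add_right cinner_diff_left cinner_diff_right)
  then have "complex_of_real ((norm (x + y))\<^sup>2 + (norm (x - y))\<^sup>2)
      = of_real (2 * (norm x)\<^sup>2 + 2 * (norm y)\<^sup>2)"
    by (simp add: cinner_self)
  then show ?thesis using of_real_eq_iff by blast
qed

lemma bounded_linear_scaleC: "bounded_linear (scaleC c :: 'a::complex_inner \<Rightarrow> 'a)"
proof (rule bounded_linear_intro[where K="cmod c"])
  show "scaleC c (r *\<^sub>R x) = r *\<^sub>R scaleC c x" for r and x :: 'a
    by (simp add: scaleR_scaleC scaleC_scaleC mult.commute)
qed (simp_all add: scaleC_add_right norm_scaleC mult.commute)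

lemma bounded_linear_cinner_left: "bounded_linear (\<lambda>x::'a::complex_inner. cinner x y)"
  by (rule bounded_linear_intro[where K="norm y"])
    (simp_all add: cinner_add_left cinner_scaleR_left scaleR_conv_of_real cmod_cinner_le)

lemma bounded_linear_cinner_right: "bounded_linear (\<lambda>x::'a::complex_inner. cinner y x)"
  by (rule bounded_linear_intro[where K="norm y"])
    (auto simp: cinner_add_right cinner_scaleR_right scaleR_conv_of_real intro: order_trans[OF cmod_cinner_le[of y]])


section \<open>Complex-linear operators and the Riesz representation\<close>

definition clinear :: "('a::complex_inner \<Rightarrow> 'a) \<Rightarrow> bool" where
  "clinear T \<longleftrightarrow> (\<forall>x y. T (x + y) = T x + T y) \<and> (\<forall>c x. T (scaleC c x) = scaleC c (T x))"

lemma clinearD: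
  assumes "clinear T"
  shows clinear_add: "T (x + y) = T x + T y"
    and clinear_scaleC: "T (scaleC c x) = scaleC c (T x)"
  using assms unfolding clinear_def by auto

lemma clinear_diff: "clinear T \<Longrightarrow> T (x - y) = T x - T y"
  using clinear_add[of T "x - y" y] by simp

lemma clinear_scaleR: "clinear T \<Longrightarrow> T (r *\<^sub>R x) = r *\<^sub>R T x"
  by (simp add: scaleR_scaleC clinear_scaleC)

lemma clinear_add_ops: "clinear P \<Longrightarrow> clinear Q \<Longrightarrow> clinear (\<lambda>x. P x + Q x)"
  by (simp add: clinear_def scaleC_add_right algebra_simps)

lemma clinear_scaleR_op: "clinear P \<Longrightarrow> clinear (\<lambda>x. r *\<^sub>R P x)"
  by (simp add: clinear_def scaleR_add_right scaleR_scaleC scaleC_scaleC scaleC_add_right mult.commute)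

lemma clinear_funpow: "clinear C \<Longrightarrow> clinear (C ^^ k)"
  by (induction k) (auto simp: clinear_def)

lemma bounded_clinear_clinear: "bounded_clinear T \<Longrightarrow> clinear T"
  unfolding bounded_clinear_def clinear_def using linear_add bounded_linear.linear by blast

lemma bounded_clinear_bounded_linear: "bounded_clinear T \<Longrightarrow> bounded_linear T"
  unfolding bounded_clinear_def by blast

lemma bounded_clinearI:
  assumes "clinear (T::'a::complex_inner \<Rightarrow> 'a)" "\<And>x. norm (T x) \<le> K * norm x"
  shows "bounded_clinear T"
proof -
  have "bounded_linear T"
    by (rule bounded_linear_intro[where K=K])
      (use assms in \<open>auto simp: clinear_add clinear_scaleR mult.commute\<close>)
  then show ?thesis using assms(1) unfolding bounded_clinear_def clinear_def by blast
qed

lemma bounded_clinear_onorm: "bounded_clinear T \<Longrightarrow> norm (T x) \<le> onorm T * norm x"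
  by (rule onorm) (rule bounded_clinear_bounded_linear)

lemma bounded_clinear_onorm_nonneg: "bounded_clinear T \<Longrightarrow> 0 \<le> onorm T"
  by (rule onorm_pos_le) (rule bounded_clinear_bounded_linear)

lemma Re_cinner_le_onorm:
  assumes "bounded_linear T"
  shows "Re (cinner (T x) x) \<le> onorm T * (norm x)\<^sup>2"
proof -
  have "Re (cinner (T x) x) \<le> norm (T x) * norm x"
    by (rule Re_cinner_le)
  also have "\<dots> \<le> onorm T * norm x * norm x"
    by (rule mult_right_mono[OF onorm[OF assms]]) simp
  finally show ?thesis by (simp add: power2_eq_square mult.assoc)
qed

text \<open>Hypothesis \<open>mid\<close> holds for a minimizing sequence in a midpoint-convex set whose
  elements all have norm at least \<open>d\<close>.\<close>

lemma minimizing_sequence_Cauchy: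
  fixes xs :: "nat \<Rightarrow> 'a::complex_inner"
  assumes d: "0 \<le> d"
    and mid: "\<And>m n. 2 * d \<le> norm (xs m + xs n)"
    and close: "\<And>n. norm (xs n) \<le> d + inverse (real (Suc n))"
  shows "Cauchy xs"
proof (rule CauchyI)
  fix e :: real assume e: "0 < e"
  then obtain N where N: "inverse (real (Suc N)) < e\<^sup>2 / (8 * d + 4)"
    using d reals_Archimedean[of "e\<^sup>2 / (8 * d + 4)"] by auto
  define \<epsilon> where "\<epsilon> = inverse (real (Suc N))"
  have \<epsilon>: "0 < \<epsilon>" "\<epsilon> \<le> 1" by (auto simp: \<epsilon>_def inverse_le_1_iff)
  have "norm (xs m - xs n) < e" if mn: "N \<le> m" "N \<le> n" for m n
  proof -
    have "norm (xs k) \<le> d + \<epsilon>" if "N \<le> k" for k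
    proof -
      have "inverse (real (Suc k)) \<le> \<epsilon>" using that by (simp add: \<epsilon>_def le_imp_inverse_le)
      then show ?thesis using close[of k] by linarith
    qed
    then have "(norm (xs m))\<^sup>2 \<le> (d + \<epsilon>)\<^sup>2" "(norm (xs n))\<^sup>2 \<le> (d + \<epsilon>)\<^sup>2"
      using mn by (auto intro!: power_mono)
    moreover have "(2 * d)\<^sup>2 \<le> (norm (xs m + xs n))\<^sup>2"
      using power_mono[OF mid[of m n], of 2] d by simp
    ultimately have "(norm (xs m - xs n))\<^sup>2 \<le> 4 * (d + \<epsilon>)\<^sup>2 - (2 * d)\<^sup>2"
      using parallelogram_law[of "xs m" "xs n"] by linarith
    also have "\<dots> = (8 * d + 4 * \<epsilon>) * \<epsilon>" by (simp add: power2_eq_square algebra_simps)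
    also have "\<dots> \<le> (8 * d + 4) * \<epsilon>" using \<epsilon> by (intro mult_right_mono) auto
    also have "\<dots> < e\<^sup>2" using N d by (simp add: \<epsilon>_def field_simps)
    finally show ?thesis using e by (simp add: power_less_imp_less_base)
  qed
  then show "\<exists>N. \<forall>m\<ge>N. \<forall>n\<ge>N. norm (xs m - xs n) < e" by blast
qed

lemma exists_min_norm_level_set:
  fixes f :: "'a::chilbert_space \<Rightarrow> complex"
  assumes f: "bounded_linear f" and x0: "f x0 = 1"
  shows "\<exists>z. f z = 1 \<and> (\<forall>y. f y = 1 \<longrightarrow> norm z \<le> norm y)"
proof -
  define M where "M = {x. f x = 1}"
  define d where "d = Inf (norm ` M)"
  have ne: "norm ` M \<noteq> {}" using x0 by (auto simp: M_def)
  have bdd: "bdd_below (norm ` M)" by (rule bdd_belowI[of _ 0]) auto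
  have d_le: "d \<le> norm y" if "y \<in> M" for y
    unfolding d_def using bdd that by (auto intro: cInf_lower)
  have d: "0 \<le> d" unfolding d_def using ne by (auto intro: cInf_greatest)
  have "\<exists>x\<in>M. norm x < d + inverse (real (Suc n))" for n
    using cInf_less_iff[OF ne bdd, of "d + inverse (real (Suc n))"] by (simp add: d_def)
  then obtain xs where xs: "\<And>n. xs n \<in> M" "\<And>n. norm (xs n) < d + inverse (real (Suc n))"
    by metis
  have "Cauchy xs"
  proof (rule minimizing_sequence_Cauchy[OF d])
    fix m n
    have "(1/2) *\<^sub>R (xs m + xs n) \<in> M"
      using xs(1)[of m] xs(1)[of n]
      by (simp add: M_def linear_add linear_scale bounded_linear.linear[OF f] scaleR_conv_of_real)
    then show "2 * d \<le> norm (xs m + xs n)" using d_le by fastforce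
  qed (use xs(2) less_imp_le in blast)
  then obtain z where z: "xs \<longlonglongrightarrow> z" using Cauchy_convergent convergent_def by blast
  have "(\<lambda>n. f (xs n)) \<longlonglongrightarrow> f z" by (rule bounded_linear.tendsto[OF f z])
  moreover have "(\<lambda>n. f (xs n)) = (\<lambda>n. 1)" using xs(1) by (simp add: M_def)
  ultimately have fz: "f z = 1" using LIMSEQ_unique[OF tendsto_const] by fastforce
  have "norm z \<le> d"
  proof (rule LIMSEQ_le)
    show "(\<lambda>n. norm (xs n)) \<longlonglongrightarrow> norm z" by (rule tendsto_norm[OF z])
    show "(\<lambda>n. d + inverse (real (Suc n))) \<longlonglongrightarrow> d"
      using tendsto_add[OF tendsto_const LIMSEQ_inverse_real_of_nat, of d] by simp
  qed (use xs(2) less_imp_le in blast)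
  then show ?thesis using fz d_le by (force simp: M_def)
qed

text \<open>First-order condition for minimality: moving from \<open>z\<close> along \<open>v\<close> with step
  \<open>-s \<langle>v,z\<rangle>\<close> changes \<open>\<parallel>z\<parallel>\<^sup>2\<close> by \<open>s |\<langle>v,z\<rangle>|\<^sup>2 (s \<parallel>v\<parallel>\<^sup>2 - 2)\<close>, which is negative for small
  \<open>s > 0\<close> unless \<open>\<langle>v,z\<rangle> = 0\<close>.\<close>

lemma min_norm_orthogonal:
  fixes z v :: "'a::complex_inner"
  assumes min: "\<And>t. norm z \<le> norm (z + scaleC t v)"
  shows "cinner v z = 0"
proof -
  define a where "a = cinner v z"
  define q where "q = (cmod a)\<^sup>2"
  define nv where "nv = (norm v)\<^sup>2"
  define s where "s = 1 / (nv + 1)"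
  have "0 \<le> nv" by (simp add: nv_def)
  then have s: "0 < s" "s * nv < 1" by (auto simp: s_def field_simps)
  define t where "t = - (of_real s * cnj a)"
  have "complex_of_real ((norm (z + scaleC t v))\<^sup>2) = cinner (z + scaleC t v) (z + scaleC t v)"
    by (simp add: cinner_self)
  also have "\<dots> = cinner z z + cnj t * cnj a + t * a + t * cnj t * cinner v v"
    by (simp add: cinner_add_left cinner_add_right cinner_scaleC_left
        cinner_scaleC_right cinner_commute[of z v] flip: a_def) (simp add: algebra_simps)
  also have "\<dots> = of_real ((norm z)\<^sup>2 + s * q * (s * nv - 2))"
  proof -
    have aa: "a * cnj a = of_real q" by (simp add: q_def flip: complex_norm_square)
    show ?thesis
      by (simp add: t_def cinner_self nv_def algebra_simps power2_eq_square flip: aa)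
  qed
  finally have "(norm (z + scaleC t v))\<^sup>2 = (norm z)\<^sup>2 + s * q * (s * nv - 2)"
    using of_real_eq_iff by blast
  moreover have "(norm z)\<^sup>2 \<le> (norm (z + scaleC t v))\<^sup>2" using min[of t] by (simp add: power_mono)
  ultimately have "0 \<le> s * q * (s * nv - 2)" by simp
  with s have "q \<le> 0" by (smt (verit) mult_pos_neg mult_pos_pos zero_le_power2 q_def)
  then show ?thesis by (simp add: q_def a_def)
qed

lemma riesz_representation:
  fixes f :: "'a::chilbert_space \<Rightarrow> complex"
  assumes add: "\<And>x y. f (x + y) = f x + f y"
    and scale: "\<And>c x. f (scaleC c x) = c * f x"
    and bound: "\<And>x. cmod (f x) \<le> K * norm x"
  shows "\<exists>w. \<forall>x. f x = cinner x w"
proof (cases "\<forall>x. f x = 0")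
  case True
  then show ?thesis by (intro exI[of _ 0]) simp
next
  case False
  then obtain x0 where x0: "f x0 \<noteq> 0" by blast
  have f_diff: "f (x - y) = f x - f y" for x y using add[of "x - y" y] by simp
  have "bounded_linear f"
    by (rule bounded_linear_intro[where K=K])
      (auto simp: add scale scaleR_scaleC scaleR_conv_of_real bound mult.commute)
  moreover have "f (scaleC (inverse (f x0)) x0) = 1" using x0 by (simp add: scale)
  ultimately obtain z where fz: "f z = 1" and z_min: "\<And>y. f y = 1 \<Longrightarrow> norm z \<le> norm y"
    using exists_min_norm_level_set by blast
  have orth: "cinner v z = 0" if "f v = 0" for v
    using that by (intro min_norm_orthogonal z_min) (simp add: add scale fz)
  have zz: "cinner z z \<noteq> 0"
    using fz add[of 0 0] by (auto simp: cinner_self_eq_zero)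
  have "f x = cinner x (scaleC (inverse (cnj (cinner z z))) z)" for x
  proof -
    have "cinner (x - scaleC (f x) z) z = 0" by (rule orth) (simp add: f_diff scale fz)
    then have "cinner x z = f x * cinner z z" by (simp add: cinner_diff_left cinner_scaleC_left)
    then show ?thesis using zz by (simp add: cinner_scaleC_right)
  qed
  then show ?thesis by blast
qed


lemma adjoint_exists:
  fixes A :: "'a::chilbert_space \<Rightarrow> 'a"
  assumes A: "bounded_clinear A"
  shows "\<exists>S. bounded_clinear S \<and> (\<forall>x y. cinner (A x) y = cinner x (S y))"
proof -
  have cA: "clinear A" by (rule bounded_clinear_clinear[OF A])
  have "\<exists>w. \<forall>x. cinner (A x) y = cinner x w" for y
  proof (rule riesz_representation[where K="onorm A * norm y"])
    fix x
    have "cmod (cinner (A x) y) \<le> norm (A x) * norm y" by (rule cmod_cinner_le)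
    also have "\<dots> \<le> onorm A * norm x * norm y"
      by (rule mult_right_mono[OF bounded_clinear_onorm[OF A]]) simp
    finally show "cmod (cinner (A x) y) \<le> onorm A * norm y * norm x" by (simp only: mult_ac)
  qed (simp_all add: clinear_add[OF cA] clinear_scaleC[OF cA] cinner_add_left cinner_scaleC_left)
  then obtain S where S: "\<And>x y. cinner (A x) y = cinner x (S y)" by metis
  have "clinear S" unfolding clinear_def
  proof (intro conjI allI)
    show "S (y + y') = S y + S y'" for y y'
      by (rule cinner_eqI_right) (simp add: cinner_add_right flip: S)
    show "S (scaleC c y) = scaleC c (S y)" for c y
      by (rule cinner_eqI_right) (simp add: cinner_scaleC_right flip: S)
  qed
  moreover have "norm (S y) \<le> onorm A * norm y" for y
  proof -
    have "(norm (S y))\<^sup>2 = Re (cinner (A (S y)) y)" by (simp add: S Re_cinner_self)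
    also have "\<dots> \<le> norm (A (S y)) * norm y"
      by (rule Re_cinner_le)
    also have "\<dots> \<le> onorm A * norm (S y) * norm y"
      by (rule mult_right_mono[OF bounded_clinear_onorm[OF A]]) simp
    finally have "norm (S y) * norm (S y) \<le> (onorm A * norm y) * norm (S y)"
      by (simp add: power2_eq_square algebra_simps)
    then show ?thesis
      using bounded_clinear_onorm_nonneg[OF A] by (cases "S y = 0") auto
  qed
  ultimately show ?thesis using S bounded_clinearI by blast
qed

lemma adj_characterization:
  fixes A :: "'a::chilbert_space \<Rightarrow> 'a"
  assumes "bounded_clinear A"
  shows "bounded_clinear (adj A) \<and> (\<forall>x y. cinner (A x) y = cinner x (adj A y))"
proof -
  obtain S where S: "bounded_clinear S" "\<forall>x y. cinner (A x) y = cinner x (S y)"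
    using adjoint_exists[OF assms] by blast
  have "adj A = S" unfolding adj_def
  proof (rule the_equality)
    fix S' assume "bounded_clinear S' \<and> (\<forall>x y. cinner (A x) y = cinner x (S' y))"
    then have "S' y = S y" for y using S(2) by (intro cinner_eqI_right) simp
    then show "S' = S" ..
  qed (use S in blast)
  then show ?thesis using S by simp
qed

lemma bounded_clinear_adj: "bounded_clinear A \<Longrightarrow> bounded_clinear (adj (A::'a::chilbert_space \<Rightarrow> 'a))"
  using adj_characterization by blast

lemma cinner_adj_right:
  "bounded_clinear A \<Longrightarrow> cinner (A x) y = cinner x (adj (A::'a::chilbert_space \<Rightarrow> 'a) y)"
  using adj_characterization by blast

lemma cinner_adj_left:
  "bounded_clinear A \<Longrightarrow> cinner (adj A x) y = cinner x ((A::'a::chilbert_space \<Rightarrow> 'a) y)"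
  by (metis cinner_adj_right cinner_commute)

lemma adj_adj:
  fixes A :: "'a::chilbert_space \<Rightarrow> 'a"
  assumes A: "bounded_clinear A"
  shows "adj (adj A) = A"
  by (rule ext, rule cinner_eqI_right)
    (simp add: cinner_adj_left[OF A] flip: cinner_adj_right[OF bounded_clinear_adj[OF A]])


definition hermitian :: "('a::complex_inner \<Rightarrow> 'a) \<Rightarrow> bool" where
  "hermitian T \<longleftrightarrow> (\<forall>x y. cinner (T x) y = cinner x (T y))"

lemma hermitianD: "hermitian T \<Longrightarrow> cinner (T x) y = cinner x (T y)"
  unfolding hermitian_def by blast

lemma hermitian_add_ops: "hermitian P \<Longrightarrow> hermitian Q \<Longrightarrow> hermitian (\<lambda>x. P x + Q x)"
  by (simp add: hermitian_def cinner_add_left cinner_add_right)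

lemma hermitian_scaleR_op: "hermitian P \<Longrightarrow> hermitian (\<lambda>x. r *\<^sub>R P x)"
  by (simp add: hermitian_def cinner_scaleR_left cinner_scaleR_right)

lemma hermitian_Im_form:
  assumes "hermitian T"
  shows "Im (cinner (T x) x) = 0"
proof -
  have "cinner (T x) x = cnj (cinner (T x) x)"
    using hermitianD[OF assms, of x x] cinner_commute[of x "T x"] by simp
  then show ?thesis by (metis complex_cnj_cancel_iff Reals_cnj_iff complex_is_Real_iff)
qed

text \<open>In a complex space a real quadratic form comes from a hermitian operator (polarization).\<close>

lemma positive_op_iff:
  "positive_op S \<longleftrightarrow> bounded_clinear S \<and> hermitian S \<and> (\<forall>x. 0 \<le> Re (cinner (S x) x))"
proof
  assume "positive_op S"
  then have S: "bounded_clinear S" and im: "\<And>x. Im (cinner (S x) x) = 0"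
    and re: "\<And>x. 0 \<le> Re (cinner (S x) x)" unfolding positive_op_def by auto
  have cS: "clinear S" by (rule bounded_clinear_clinear[OF S])
  have "hermitian S" unfolding hermitian_def
  proof (intro allI)
    fix x y
    define a where "a = cinner (S x) y"
    define b where "b = cinner (S y) x"
    have "Im a + Im b = 0"
      using im[of "x + y"] im[of x] im[of y]
      by (simp add: clinear_add[OF cS] cinner_add_left cinner_add_right a_def b_def)
    moreover have "Re b - Re a = 0"
      using im[of "x + scaleC \<i> y"] im[of x] im[of y]
      by (simp add: clinear_add[OF cS] clinear_scaleC[OF cS] cinner_add_left cinner_add_right
          cinner_scaleC_left cinner_scaleC_right a_def b_def)
    ultimately have "b = cnj a" by (simp add: complex_eq_iff)
    then show "cinner (S x) y = cinner x (S y)"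
      by (simp add: a_def b_def cinner_commute[of x "S y"])
  qed
  then show "bounded_clinear S \<and> hermitian S \<and> (\<forall>x. 0 \<le> Re (cinner (S x) x))"
    using S re by blast
next
  assume "bounded_clinear S \<and> hermitian S \<and> (\<forall>x. 0 \<le> Re (cinner (S x) x))"
  then show "positive_op S" unfolding positive_op_def using hermitian_Im_form by blast
qed

lemma positive_op_scaleR:
  fixes S :: "'a::chilbert_space \<Rightarrow> 'a"
  assumes "positive_op S" "0 \<le> r"
  shows "positive_op (\<lambda>x. r *\<^sub>R S x)"
proof -
  have S: "bounded_clinear S" "hermitian S" "\<And>x. 0 \<le> Re (cinner (S x) x)"
    using assms(1) by (auto simp: positive_op_iff)
  have "bounded_clinear (\<lambda>x. r *\<^sub>R S x)"
    using clinear_scaleR_op[OF bounded_clinear_clinear[OF S(1)]]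
    by (rule bounded_clinearI[where K="\<bar>r\<bar> * onorm S"])
      (simp add: bounded_clinear_onorm[OF S(1)] mult.assoc mult_left_mono)
  then show ?thesis
    using S assms(2)
    by (simp add: positive_op_iff hermitian_scaleR_op cinner_scaleR_left del: of_real_inverse)
qed

lemma norm_sq_le_form:
  fixes D :: "'a::complex_inner \<Rightarrow> 'a"
  assumes D: "clinear D" "hermitian D"
    and nonneg: "\<And>z. 0 \<le> Re (cinner (D z) z)"
    and le: "\<And>z. Re (cinner (D z) z) \<le> (norm z)\<^sup>2"
  shows "(norm (D x))\<^sup>2 \<le> Re (cinner (D x) x)"
proof -
  define u where "u = D x"
  have Dxu: "cinner (D x) u = of_real ((norm u)\<^sup>2)" by (simp add: u_def cinner_self)
  have Dux: "cinner (D u) x = of_real ((norm u)\<^sup>2)"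
    by (simp add: hermitianD[OF D(2)] u_def cinner_self)
  have "cinner (D (x - u)) (x - u) = cinner (D x) x - cinner (D x) u - cinner (D u) x + cinner (D u) u"
    by (simp add: clinear_diff[OF D(1)] cinner_diff_left cinner_diff_right)
  then have "Re (cinner (D (x - u)) (x - u))
      = Re (cinner (D x) x) - 2 * (norm u)\<^sup>2 + Re (cinner (D u) u)" by (simp add: Dxu Dux)
  then show ?thesis using nonneg[of "x - u"] le[of u] by (simp add: u_def)
qed

lemma positive_op_form_eq_0:
  fixes S :: "'a::chilbert_space \<Rightarrow> 'a"
  assumes S: "positive_op S" and form: "Re (cinner (S y) y) = 0"
  shows "S y = 0"
proof -
  have bS: "bounded_clinear S" and hS: "hermitian S" and nonneg: "\<And>x. 0 \<le> Re (cinner (S x) x)"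
    using S by (auto simp: positive_op_iff)
  define K where "K = onorm S + 1"
  have K: "0 < K" using bounded_clinear_onorm_nonneg[OF bS] by (simp add: K_def)
  have form_D: "Re (cinner (inverse K *\<^sub>R S x) x) = inverse K * Re (cinner (S x) x)" for x
    by (simp add: cinner_scaleR_left del: of_real_inverse)
  have "(norm (inverse K *\<^sub>R S y))\<^sup>2 \<le> Re (cinner (inverse K *\<^sub>R S y) y)"
  proof (rule norm_sq_le_form)
    show "clinear (\<lambda>x. inverse K *\<^sub>R S x)"
      by (rule clinear_scaleR_op[OF bounded_clinear_clinear[OF bS]])
    show "hermitian (\<lambda>x. inverse K *\<^sub>R S x)" by (rule hermitian_scaleR_op[OF hS])
    show "0 \<le> Re (cinner (inverse K *\<^sub>R S x) x)" for x using nonneg[of x] K by (simp add: form_D)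
    fix x
    have "Re (cinner (S x) x) \<le> K * (norm x)\<^sup>2"
      using Re_cinner_le_onorm[OF bounded_clinear_bounded_linear[OF bS], of x] zero_le_power2[of "norm x"]
      unfolding K_def distrib_right by linarith
    then show "Re (cinner (inverse K *\<^sub>R S x) x) \<le> (norm x)\<^sup>2"
      unfolding form_D using K by (simp add: field_simps)
  qed
  then show ?thesis using form K by (simp add: form_D)
qed

section \<open>Polynomials with nonnegative coefficients in an operator\<close>

inductive_set nonneg_polys :: "('a::complex_inner \<Rightarrow> 'a) \<Rightarrow> ('a \<Rightarrow> 'a) set" for C where
  funpow: "C ^^ k \<in> nonneg_polys C"
| add: "P \<in> nonneg_polys C \<Longrightarrow> Q \<in> nonneg_polys C \<Longrightarrow> (\<lambda>x. P x + Q x) \<in> nonneg_polys C"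
| scaleR: "P \<in> nonneg_polys C \<Longrightarrow> 0 \<le> r \<Longrightarrow> (\<lambda>x. r *\<^sub>R P x) \<in> nonneg_polys C"

lemma zero_in_nonneg_polys: "(\<lambda>x. 0) \<in> nonneg_polys C"
  using nonneg_polys.scaleR[OF nonneg_polys.funpow[of 0], of 0] by simp

lemma clinear_nonneg_polys:
  assumes "clinear C" "P \<in> nonneg_polys C"
  shows "clinear P"
  using assms(2) by (induction P rule: nonneg_polys.induct)
    (auto intro: clinear_funpow[OF assms(1)] clinear_add_ops clinear_scaleR_op)

lemma nonneg_polys_commute:
  assumes S: "clinear S" and SC: "\<And>x. S (C x) = C (S x)" and P: "P \<in> nonneg_polys C"
  shows "S (P x) = P (S x)"
  using P
proof (induction P arbitrary: x rule: nonneg_polys.induct)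
  case (funpow k)
  show ?case by (induction k arbitrary: x) (auto simp: SC)
qed (simp_all add: clinear_add[OF S] clinear_scaleR[OF S])

lemma nonneg_polys_comp:
  assumes C: "clinear C" and P: "P \<in> nonneg_polys C" and Q: "Q \<in> nonneg_polys C"
  shows "(\<lambda>x. P (Q x)) \<in> nonneg_polys C"
  using P
proof (induction P rule: nonneg_polys.induct)
  case (funpow k)
  have Ck: "clinear (C ^^ k)" by (rule clinear_funpow[OF C])
  show ?case using Q
  proof (induction Q rule: nonneg_polys.induct)
    case (funpow j)
    have "(\<lambda>x. (C ^^ k) ((C ^^ j) x)) = C ^^ (k + j)" by (simp add: funpow_add fun_eq_iff)
    then show ?case by (simp add: nonneg_polys.funpow)
  qed (simp_all add: clinear_add[OF Ck] clinear_scaleR[OF Ck] nonneg_polys.add nonneg_polys.scaleR)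
qed (simp_all add: nonneg_polys.add nonneg_polys.scaleR)

lemma hermitian_funpow: "hermitian C \<Longrightarrow> hermitian (C ^^ k)"
proof (induction k)
  case (Suc k)
  show ?case unfolding hermitian_def
  proof (intro allI)
    fix x y
    have "cinner ((C ^^ Suc k) x) y = cinner ((C ^^ k) x) (C y)"
      by (simp add: hermitianD[OF Suc.prems])
    also have "\<dots> = cinner x ((C ^^ k) (C y))" using Suc by (simp add: hermitianD)
    also have "\<dots> = cinner x ((C ^^ Suc k) y)" by (simp add: funpow_swap1)
    finally show "cinner ((C ^^ Suc k) x) y = cinner x ((C ^^ Suc k) y)" .
  qed
qed (simp add: hermitian_def)

text \<open>Even powers are squares \<open>(C\<^sup>m)\<^sup>* C\<^sup>m\<close>, odd powers are \<open>(C\<^sup>m)\<^sup>* C C\<^sup>m\<close>.\<close>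

lemma Re_form_funpow_nonneg:
  assumes h: "hermitian C" and nonneg: "\<And>x. 0 \<le> Re (cinner (C x) x)"
  shows "0 \<le> Re (cinner ((C ^^ k) x) x)"
proof -
  define m where "m = k div 2"
  have hm: "hermitian (C ^^ m)" by (rule hermitian_funpow[OF h])
  have "k = m + m \<or> k = Suc (m + m)" unfolding m_def by presburger
  then show ?thesis
  proof
    assume "k = m + m"
    then have "cinner ((C ^^ k) x) x = cinner ((C ^^ m) x) ((C ^^ m) x)"
      by (simp add: funpow_add hermitianD[OF hm])
    then show ?thesis by (simp add: Re_cinner_self)
  next
    assume "k = Suc (m + m)"
    then have "cinner ((C ^^ k) x) x = cinner (C ((C ^^ m) x)) ((C ^^ m) x)"
      by (simp add: funpow_add hermitianD[OF hm] funpow_swap1)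
    then show ?thesis using nonneg by simp
  qed
qed

lemma nonneg_polys_positive:
  assumes h: "hermitian C" and nonneg: "\<And>x. 0 \<le> Re (cinner (C x) x)"
    and P: "P \<in> nonneg_polys C"
  shows "hermitian P \<and> (\<forall>x. 0 \<le> Re (cinner (P x) x))"
  using P
proof (induction P rule: nonneg_polys.induct)
  case (funpow k)
  then show ?case using hermitian_funpow[OF h] Re_form_funpow_nonneg[OF h nonneg] by blast
next
  case (add P Q)
  then show ?case by (simp add: hermitian_add_ops cinner_add_left)
next
  case (scaleR P r)
  then show ?case by (simp add: hermitian_scaleR_op cinner_scaleR_left del: of_real_inverse)
qed

section \<open>Square roots of positive operators\<close>

text \<open>For \<open>0 \<le> C \<le> I\<close> the iterates \<open>Y\<^sub>0 = 0\<close>, \<open>Y\<^sub>n\<^sub>+\<^sub>1 = (C + Y\<^sub>n\<^sup>2) / 2\<close> are polynomials in \<open>C\<close> with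
  nonnegative coefficients, and so are the increments
  \<open>Y\<^sub>n\<^sub>+\<^sub>2 - Y\<^sub>n\<^sub>+\<^sub>1 = (Y\<^sub>n\<^sub>+\<^sub>1 - Y\<^sub>n) (Y\<^sub>n\<^sub>+\<^sub>1 + Y\<^sub>n) / 2\<close>.  Hence the \<open>Y\<^sub>n\<close> increase, stay below \<open>I\<close>, and
  converge strongly to \<open>Y = (C + Y\<^sup>2) / 2\<close>; then \<open>(I - Y)\<^sup>2 = I - C\<close>.\<close>

primrec sqrt_iter :: "('a::real_vector \<Rightarrow> 'a) \<Rightarrow> nat \<Rightarrow> 'a \<Rightarrow> 'a" where
  "sqrt_iter C 0 = (\<lambda>x. 0)"
| "sqrt_iter C (Suc n) = (\<lambda>x. (1/2) *\<^sub>R (C x + sqrt_iter C n (sqrt_iter C n x)))"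

locale positive_contraction =
  fixes C :: "'a::chilbert_space \<Rightarrow> 'a"
  assumes clinear_C: "clinear C" and hermitian_C: "hermitian C"
    and form_nonneg: "\<And>x. 0 \<le> Re (cinner (C x) x)"
    and form_le: "\<And>x. Re (cinner (C x) x) \<le> (norm x)\<^sup>2"
begin

abbreviation Y :: "nat \<Rightarrow> 'a \<Rightarrow> 'a" where "Y \<equiv> sqrt_iter C"

lemma sqrt_iter_in_nonneg_polys: "Y n \<in> nonneg_polys C"
proof (induction n)
  case (Suc n)
  have "(\<lambda>x. C x + Y n (Y n x)) \<in> nonneg_polys C"
    using nonneg_polys.add[OF nonneg_polys.funpow[of 1] nonneg_polys_comp[OF clinear_C Suc Suc]]
    by simp
  from nonneg_polys.scaleR[OF this, of "1/2"] show ?case by simp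
qed (simp add: zero_in_nonneg_polys)

lemma clinear_sqrt_iter: "clinear (Y n)"
  by (rule clinear_nonneg_polys[OF clinear_C sqrt_iter_in_nonneg_polys])

lemma sqrt_iter_commute: "Y m (Y n x) = Y n (Y m x)"
  by (rule nonneg_polys_commute[OF clinear_sqrt_iter _ sqrt_iter_in_nonneg_polys])
    (rule nonneg_polys_commute[OF clinear_C _ sqrt_iter_in_nonneg_polys, symmetric], simp)

lemma sqrt_iter_Suc_diff: "Y (Suc m) x - Y (Suc n) x = (1/2) *\<^sub>R (Y m (Y m x) - Y n (Y n x))"
  by (simp add: algebra_simps)

lemma sqrt_iter_increment_in_nonneg_polys: "(\<lambda>x. Y (Suc n) x - Y n x) \<in> nonneg_polys C"
proof (induction n)
  case 0
  show ?case using nonneg_polys.scaleR[OF nonneg_polys.funpow[of 1], of "1/2"] by simp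
next
  case (Suc n)
  define D where "D = (\<lambda>x. Y (Suc n) x - Y n x)"
  have "(\<lambda>x. (1/2) *\<^sub>R D (Y (Suc n) x + Y n x)) \<in> nonneg_polys C"
    using nonneg_polys_comp[OF clinear_C Suc[folded D_def]
        nonneg_polys.add[OF sqrt_iter_in_nonneg_polys sqrt_iter_in_nonneg_polys]]
    by (rule nonneg_polys.scaleR) simp
  moreover have "(1/2) *\<^sub>R D (Y (Suc n) x + Y n x) = Y (Suc (Suc n)) x - Y (Suc n) x" for x
  proof -
    have "D (Y (Suc n) x + Y n x) = Y (Suc n) (Y (Suc n) x) - Y n (Y n x)"
      by (simp only: D_def clinear_add[OF clinear_sqrt_iter] sqrt_iter_commute[of "Suc n" n x])
        (simp add: algebra_simps del: sqrt_iter.simps)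
    then show ?thesis by (simp only: sqrt_iter_Suc_diff)
  qed
  ultimately show ?case by simp
qed

lemma sqrt_iter_diff_in_nonneg_polys: "n \<le> m \<Longrightarrow> (\<lambda>x. Y m x - Y n x) \<in> nonneg_polys C"
proof (induction m)
  case (Suc m)
  show ?case
  proof (cases "n = Suc m")
    case False
    with Suc have "n \<le> m" by simp
    from nonneg_polys.add[OF sqrt_iter_increment_in_nonneg_polys[of m] Suc.IH[OF this]]
    show ?thesis by simp
  qed (simp add: zero_in_nonneg_polys)
qed (simp add: zero_in_nonneg_polys)

lemma sqrt_iter_positive: "hermitian (Y n) \<and> (\<forall>x. 0 \<le> Re (cinner (Y n x) x))"
  by (rule nonneg_polys_positive[OF hermitian_C form_nonneg sqrt_iter_in_nonneg_polys])

lemma sqrt_iter_diff_positive: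
  "n \<le> m \<Longrightarrow> hermitian (\<lambda>x. Y m x - Y n x) \<and> (\<forall>x. 0 \<le> Re (cinner (Y m x - Y n x) x))"
  by (rule nonneg_polys_positive[OF hermitian_C form_nonneg sqrt_iter_diff_in_nonneg_polys])

lemma norm_C_le: "norm (C x) \<le> norm x"
proof -
  have "(norm (C x))\<^sup>2 \<le> Re (cinner (C x) x)"
    by (rule norm_sq_le_form[OF clinear_C hermitian_C form_nonneg form_le])
  also have "\<dots> \<le> (norm x)\<^sup>2" by (rule form_le)
  finally show ?thesis by (rule power2_le_imp_le) simp
qed

lemma norm_sqrt_iter_le: "norm (Y n x) \<le> norm x"
proof (induction n arbitrary: x)
  case (Suc n)
  have "norm (Y (Suc n) x) \<le> (1/2) * (norm (C x) + norm (Y n (Y n x)))"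
    by (simp add: norm_triangle_ineq)
  also have "\<dots> \<le> norm x"
    using norm_C_le[of x] Suc[of "Y n x"] Suc[of x] by simp
  finally show ?case .
qed simp

lemma Re_form_sqrt_iter_le: "Re (cinner (Y n x) x) \<le> (norm x)\<^sup>2"
proof -
  have "Re (cinner (Y n x) x) \<le> norm (Y n x) * norm x"
    by (rule Re_cinner_le)
  also have "\<dots> \<le> norm x * norm x" by (rule mult_right_mono[OF norm_sqrt_iter_le]) simp
  finally show ?thesis by (simp add: power2_eq_square)
qed

lemma Re_form_sqrt_iter_mono: "n \<le> m \<Longrightarrow> Re (cinner (Y n x) x) \<le> Re (cinner (Y m x) x)"
  using sqrt_iter_diff_positive[of n m] by (auto simp: cinner_diff_left)

lemma norm_sqrt_iter_diff_sq_le: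
  assumes "n \<le> m"
  shows "(norm (Y m x - Y n x))\<^sup>2 \<le> Re (cinner (Y m x) x) - Re (cinner (Y n x) x)"
proof -
  have "(norm (Y m x - Y n x))\<^sup>2 \<le> Re (cinner (Y m x - Y n x) x)"
  proof (rule norm_sq_le_form)
    show "clinear (\<lambda>x. Y m x - Y n x)"
      by (rule clinear_nonneg_polys[OF clinear_C sqrt_iter_diff_in_nonneg_polys[OF assms]])
    fix z
    have "0 \<le> Re (cinner (Y n z) z)" using sqrt_iter_positive by blast
    then show "Re (cinner (Y m z - Y n z) z) \<le> (norm z)\<^sup>2"
      using Re_form_sqrt_iter_le[of m z] by (simp add: cinner_diff_left)
  qed (use sqrt_iter_diff_positive[OF assms] in blast)+
  then show ?thesis by (simp add: cinner_diff_left)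
qed

lemma Cauchy_sqrt_iter: "Cauchy (\<lambda>n. Y n x)"
proof -
  define a where "a = (\<lambda>n. Re (cinner (Y n x) x))"
  have "incseq a" unfolding a_def by (rule incseq_SucI, rule Re_form_sqrt_iter_mono) simp
  moreover have "\<forall>i. a i \<le> (norm x)\<^sup>2" by (simp add: a_def Re_form_sqrt_iter_le)
  ultimately obtain L where "a \<longlonglongrightarrow> L" using incseq_convergent by blast
  then have "Cauchy a" by (intro convergent_Cauchy) (auto simp: convergent_def)
  show ?thesis
  proof (rule CauchyI)
    fix e :: real assume e: "0 < e"
    then obtain M where M: "\<forall>m\<ge>M. \<forall>n\<ge>M. norm (a m - a n) < e\<^sup>2"
      using \<open>Cauchy a\<close> unfolding Cauchy_iff by (meson zero_less_power)
    have less: "norm (Y m x - Y n x) < e" if "M \<le> n" "n \<le> m" for m n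
    proof -
      have "(norm (Y m x - Y n x))\<^sup>2 \<le> a m - a n"
        using norm_sqrt_iter_diff_sq_le[OF that(2)] by (simp add: a_def)
      also have "\<dots> < e\<^sup>2"
        using M that order.trans[OF that] by (metis abs_less_iff real_norm_def)
      finally show ?thesis using e by (simp add: power_less_imp_less_base)
    qed
    show "\<exists>M. \<forall>m\<ge>M. \<forall>n\<ge>M. norm (Y m x - Y n x) < e"
    proof (intro exI allI impI)
      fix m n assume "M \<le> m" "M \<le> n"
      then show "norm (Y m x - Y n x) < e"
        using less[of n m] less[of m n] by (cases "n \<le> m") (auto simp: norm_minus_commute)
    qed
  qed
qed

definition sqrt_lim :: "'a \<Rightarrow> 'a" where "sqrt_lim x = lim (\<lambda>n. Y n x)"

lemma LIMSEQ_sqrt_iter: "(\<lambda>n. Y n x) \<longlonglongrightarrow> sqrt_lim x"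
  unfolding sqrt_lim_def using Cauchy_sqrt_iter Cauchy_convergent convergent_LIMSEQ_iff by blast

lemma sqrt_lim_eqI: "(\<lambda>n. Y n x) \<longlonglongrightarrow> y \<Longrightarrow> sqrt_lim x = y"
  using LIMSEQ_sqrt_iter LIMSEQ_unique by blast

lemma clinear_sqrt_lim: "clinear sqrt_lim"
  unfolding clinear_def
proof (intro conjI allI)
  show "sqrt_lim (x + y) = sqrt_lim x + sqrt_lim y" for x y
    using tendsto_add[OF LIMSEQ_sqrt_iter[of x] LIMSEQ_sqrt_iter[of y]]
    by (intro sqrt_lim_eqI) (simp add: clinear_add[OF clinear_sqrt_iter])
  show "sqrt_lim (scaleC c x) = scaleC c (sqrt_lim x)" for c x
    using bounded_linear.tendsto[OF bounded_linear_scaleC LIMSEQ_sqrt_iter[of x], of c]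
    by (intro sqrt_lim_eqI) (simp add: clinear_scaleC[OF clinear_sqrt_iter])
qed

lemma norm_sqrt_lim_le: "norm (sqrt_lim x) \<le> norm x"
  by (rule LIMSEQ_le_const2[OF tendsto_norm[OF LIMSEQ_sqrt_iter]]) (simp add: norm_sqrt_iter_le)

lemma hermitian_sqrt_lim: "hermitian sqrt_lim"
  unfolding hermitian_def
proof (intro allI)
  fix x y
  have "(\<lambda>n. cinner (Y n x) y) \<longlonglongrightarrow> cinner (sqrt_lim x) y"
    by (rule bounded_linear.tendsto[OF bounded_linear_cinner_left LIMSEQ_sqrt_iter])
  moreover have "(\<lambda>n. cinner x (Y n y)) \<longlonglongrightarrow> cinner x (sqrt_lim y)"
    by (rule bounded_linear.tendsto[OF bounded_linear_cinner_right LIMSEQ_sqrt_iter])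
  moreover have "(\<lambda>n. cinner (Y n x) y) = (\<lambda>n. cinner x (Y n y))"
    using sqrt_iter_positive by (simp add: hermitianD)
  ultimately show "cinner (sqrt_lim x) y = cinner x (sqrt_lim y)" using LIMSEQ_unique by metis
qed

lemma Re_form_sqrt_lim_le: "Re (cinner (sqrt_lim x) x) \<le> (norm x)\<^sup>2"
  by (rule LIMSEQ_le_const2[OF tendsto_Re[OF bounded_linear.tendsto[OF bounded_linear_cinner_left
        LIMSEQ_sqrt_iter]]]) (simp add: Re_form_sqrt_iter_le)

lemma LIMSEQ_sqrt_iter_sq: "(\<lambda>n. Y n (Y n x)) \<longlonglongrightarrow> sqrt_lim (sqrt_lim x)"
proof -
  have "(\<lambda>n. norm (Y n x - sqrt_lim x)) \<longlonglongrightarrow> 0"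
    using LIMSEQ_sqrt_iter[of x] by (simp add: LIM_zero tendsto_norm_zero)
  then have "(\<lambda>n. Y n (Y n x - sqrt_lim x)) \<longlonglongrightarrow> 0"
    by (rule Lim_null_comparison[rotated]) (simp add: norm_sqrt_iter_le)
  from tendsto_add[OF this LIMSEQ_sqrt_iter[of "sqrt_lim x"]] show ?thesis
    by (simp add: clinear_diff[OF clinear_sqrt_iter])
qed

lemma sqrt_lim_fixpoint: "2 *\<^sub>R sqrt_lim x = C x + sqrt_lim (sqrt_lim x)"
proof -
  have "(\<lambda>n. Y (Suc n) x) \<longlonglongrightarrow> (1/2) *\<^sub>R (C x + sqrt_lim (sqrt_lim x))"
    by (simp, intro tendsto_intros LIMSEQ_sqrt_iter_sq)
  then have "sqrt_lim x = (1/2) *\<^sub>R (C x + sqrt_lim (sqrt_lim x))"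
    using LIMSEQ_Suc[OF LIMSEQ_sqrt_iter] LIMSEQ_unique by blast
  from arg_cong[OF this, of "scaleR 2"] show ?thesis by simp
qed

lemma sqrt_lim_commute:
  assumes S: "bounded_clinear S" and SC: "\<And>x. S (C x) = C (S x)"
  shows "S (sqrt_lim x) = sqrt_lim (S x)"
proof -
  have "(\<lambda>n. S (Y n x)) \<longlonglongrightarrow> S (sqrt_lim x)"
    by (rule bounded_linear.tendsto[OF bounded_clinear_bounded_linear[OF S] LIMSEQ_sqrt_iter])
  moreover have "(\<lambda>n. S (Y n x)) = (\<lambda>n. Y n (S x))"
    using nonneg_polys_commute[OF bounded_clinear_clinear[OF S] SC sqrt_iter_in_nonneg_polys] by simp
  ultimately show ?thesis using sqrt_lim_eqI by metis
qed

definition sqrt_compl :: "'a \<Rightarrow> 'a" where "sqrt_compl x = x - sqrt_lim x"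

lemma positive_op_sqrt_compl: "positive_op sqrt_compl"
  unfolding positive_op_iff
proof (intro conjI allI)
  have "clinear sqrt_compl" unfolding clinear_def sqrt_compl_def
    by (simp add: clinear_add[OF clinear_sqrt_lim] clinear_scaleC[OF clinear_sqrt_lim] scaleC_diff_right)
  moreover have "norm (sqrt_compl x) \<le> 2 * norm x" for x
    using norm_triangle_ineq4[of x "sqrt_lim x"] norm_sqrt_lim_le[of x] by (simp add: sqrt_compl_def)
  ultimately show "bounded_clinear sqrt_compl" by (rule bounded_clinearI)
  show "hermitian sqrt_compl"
    using hermitian_sqrt_lim by (simp add: hermitian_def sqrt_compl_def cinner_diff_left cinner_diff_right)
  show "0 \<le> Re (cinner (sqrt_compl x) x)" for x
    using Re_form_sqrt_lim_le by (simp add: sqrt_compl_def cinner_diff_left Re_cinner_self)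
qed

lemma sqrt_compl_sq: "sqrt_compl (sqrt_compl x) = x - C x"
proof -
  have "sqrt_compl (sqrt_compl x) = x - 2 *\<^sub>R sqrt_lim x + sqrt_lim (sqrt_lim x)"
    by (simp add: sqrt_compl_def clinear_diff[OF clinear_sqrt_lim] scaleR_2)
  then show ?thesis by (simp add: sqrt_lim_fixpoint)
qed

lemma sqrt_compl_commute:
  "bounded_clinear S \<Longrightarrow> (\<And>x. S (C x) = C (S x)) \<Longrightarrow> S (sqrt_compl x) = sqrt_compl (S x)"
  unfolding sqrt_compl_def by (simp add: sqrt_lim_commute clinear_diff[OF bounded_clinear_clinear])

end

lemma positive_sqrt_unique:
  fixes S R :: "'a::chilbert_space \<Rightarrow> 'a"
  assumes S: "positive_op S" and R: "positive_op R"
    and sq: "\<And>x. S (S x) = R (R x)" and comm: "\<And>x. S (R x) = R (S x)"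
  shows "S = R"
proof
  fix x
  have cS: "clinear S" and hS: "hermitian S" and nS: "\<And>z. 0 \<le> Re (cinner (S z) z)"
    using S by (auto simp: positive_op_iff bounded_clinear_clinear)
  have cR: "clinear R" and hR: "hermitian R" and nR: "\<And>z. 0 \<le> Re (cinner (R z) z)"
    using R by (auto simp: positive_op_iff bounded_clinear_clinear)
  define y where "y = S x - R x"
  have "S y + R y = 0"
    by (simp add: y_def clinear_diff[OF cS] clinear_diff[OF cR] sq comm)
  then have "Re (cinner (S y + R y) y) = 0" by simp
  then have "Re (cinner (S y) y) + Re (cinner (R y) y) = 0" by (simp only: cinner_add_left plus_complex.sel)
  then have "Re (cinner (S y) y) = 0" "Re (cinner (R y) y) = 0" using nS[of y] nR[of y] by linarith+
  then have "S y = 0" "R y = 0" using positive_op_form_eq_0 S R by blast+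
  moreover have "cinner y y = cinner x (S y) - cinner x (R y)"
    by (subst (1) y_def) (simp add: cinner_diff_left hermitianD[OF hS] hermitianD[OF hR])
  ultimately have "y = 0" by (simp add: cinner_self_eq_zero)
  then show "S x = R x" by (simp add: y_def)
qed

text \<open>Scale \<open>B\<close> into \<open>0 \<le> B/K \<le> I\<close> and take \<open>\<surd>K \<surd>(I - C)\<close> with \<open>C = I - B/K\<close>.\<close>

lemma positive_sqrt_exists:
  fixes B :: "'a::chilbert_space \<Rightarrow> 'a"
  assumes B: "positive_op B"
  shows "\<exists>R. positive_op R \<and> (\<forall>x. R (R x) = B x) \<and>
    (\<forall>S. bounded_clinear S \<longrightarrow> (\<forall>x. S (B x) = B (S x)) \<longrightarrow> (\<forall>x. S (R x) = R (S x)))"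
proof -
  have bB: "bounded_clinear B" and hB: "hermitian B" and nB: "\<And>x. 0 \<le> Re (cinner (B x) x)"
    using B by (auto simp: positive_op_iff)
  have cB: "clinear B" by (rule bounded_clinear_clinear[OF bB])
  define K where "K = onorm B + 1"
  have K: "0 < K" using bounded_clinear_onorm_nonneg[OF bB] by (simp add: K_def)
  have form_B_le: "Re (cinner (B x) x) \<le> K * (norm x)\<^sup>2" for x
    using Re_cinner_le_onorm[OF bounded_clinear_bounded_linear[OF bB], of x] zero_le_power2[of "norm x"]
    unfolding K_def distrib_right by linarith
  define C where "C = (\<lambda>x. x - inverse K *\<^sub>R B x)"
  have form_C: "Re (cinner (C x) x) = (norm x)\<^sup>2 - inverse K * Re (cinner (B x) x)" for x
    by (simp add: C_def cinner_diff_left cinner_scaleR_left Re_cinner_self del: of_real_inverse)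
  interpret positive_contraction C
  proof
    show "clinear C" unfolding clinear_def C_def
      by (simp add: clinear_add[OF cB] clinear_scaleC[OF cB] scaleC_diff_right scaleR_scaleC
          scaleC_scaleC scaleC_add_right mult.commute)
    show "hermitian C"
      using hB by (simp add: hermitian_def C_def cinner_diff_left cinner_diff_right
          cinner_scaleR_left cinner_scaleR_right)
    fix x
    have "inverse K * Re (cinner (B x) x) \<le> (norm x)\<^sup>2"
      using form_B_le[of x] K by (simp add: field_simps)
    then show "0 \<le> Re (cinner (C x) x)" by (simp add: form_C)
    show "Re (cinner (C x) x) \<le> (norm x)\<^sup>2" using nB[of x] K by (simp add: form_C)
  qed
  define R where "R = (\<lambda>x. sqrt K *\<^sub>R sqrt_compl x)"
  have "positive_op R"
    unfolding R_def by (rule positive_op_scaleR[OF positive_op_sqrt_compl]) (use K in simp)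
  moreover have "R (R x) = B x" for x
  proof -
    have clin: "clinear sqrt_compl"
      using positive_op_sqrt_compl by (simp add: positive_op_iff bounded_clinear_clinear)
    have "R (R x) = (sqrt K * sqrt K) *\<^sub>R (x - C x)"
      by (simp add: R_def clinear_scaleR[OF clin] sqrt_compl_sq)
    then show ?thesis using K by (simp add: C_def)
  qed
  moreover have "S (R x) = R (S x)" if S: "bounded_clinear S" and SB: "\<forall>x. S (B x) = B (S x)" for S x
  proof -
    have cS: "clinear S" by (rule bounded_clinear_clinear[OF S])
    have "S (C z) = C (S z)" for z using SB by (simp add: C_def clinear_diff[OF cS] clinear_scaleR[OF cS])
    then show ?thesis using sqrt_compl_commute[OF S] by (simp add: R_def clinear_scaleR[OF cS])
  qed
  ultimately show ?thesis by blast
qed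

text \<open>Uniqueness: a positive square root \<open>S\<close> of \<open>B\<close> commutes with \<open>B = S\<^sup>2\<close>, hence with the
  constructed root, and commuting positive square roots coincide.\<close>

lemma ex1_positive_sqrt:
  fixes B :: "'a::chilbert_space \<Rightarrow> 'a"
  assumes "positive_op B"
  shows "\<exists>!S. positive_op S \<and> S \<circ> S = B"
proof -
  obtain R where R: "positive_op R" "\<And>x. R (R x) = B x"
    and comm: "\<And>S x. bounded_clinear S \<Longrightarrow> (\<forall>x. S (B x) = B (S x)) \<Longrightarrow> S (R x) = R (S x)"
    using positive_sqrt_exists[OF assms] by blast
  show ?thesis
  proof
    show "positive_op R \<and> R \<circ> R = B" using R by (simp add: fun_eq_iff)
  next
    fix S assume "positive_op S \<and> S \<circ> S = B"
    then have S: "positive_op S" and SS: "\<And>x. S (S x) = B x" by (auto simp: fun_eq_iff)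
    have "S (R x) = R (S x)" for x
      using comm[of S] S by (simp add: positive_op_iff flip: SS)
    then show "S = R" using positive_sqrt_unique[OF S R(1)] SS R(2) by simp
  qed
qed

lemma positive_op_adj_comp:
  fixes T :: "'a::chilbert_space \<Rightarrow> 'a"
  assumes T: "bounded_clinear T"
  shows "positive_op (adj T \<circ> T)"
  unfolding positive_op_def
proof (intro conjI allI)
  have aT: "bounded_clinear (adj T)" by (rule bounded_clinear_adj[OF T])
  have "clinear (adj T \<circ> T)"
    using bounded_clinear_clinear[OF T] bounded_clinear_clinear[OF aT] by (simp add: clinear_def)
  moreover have "norm ((adj T \<circ> T) x) \<le> (onorm (adj T) * onorm T) * norm x" for x
    using bounded_clinear_onorm[OF aT, of "T x"]
      mult_left_mono[OF bounded_clinear_onorm[OF T, of x] bounded_clinear_onorm_nonneg[OF aT]]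
    by (simp add: mult.assoc)
  ultimately show "bounded_clinear (adj T \<circ> T)" by (rule bounded_clinearI)
qed (simp_all add: cinner_adj_left[OF T] cinner_self)

lemma absop:
  fixes T :: "'a::chilbert_space \<Rightarrow> 'a"
  assumes "bounded_clinear T"
  shows "positive_op (absop T) \<and> absop T \<circ> absop T = adj T \<circ> T"
  unfolding absop_def by (rule theI'[OF ex1_positive_sqrt[OF positive_op_adj_comp[OF assms]]])

section \<open>Numerical radius estimates\<close>

lemma numrad_le:
  assumes "0 \<le> c" and bound: "\<And>x. cmod (cinner (T x) x) \<le> c * (norm x)\<^sup>2"
  shows "numrad T \<le> c"
  unfolding numrad_def
proof (rule cSUP_least)
  show "cmod (cinner (T x) x) / (norm x)\<^sup>2 \<le> c" for x
    using bound[of x] assms(1) by (cases "x = 0") (simp_all add: divide_le_eq)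
qed simp

lemma numrad_nonneg:
  assumes bound: "\<And>x. cmod (cinner (T x) x) \<le> c * (norm x)\<^sup>2"
  shows "0 \<le> numrad T"
proof -
  have "cmod (cinner (T x) x) / (norm x)\<^sup>2 \<le> c" if "x \<noteq> 0" for x
    using bound[of x] that by (simp add: divide_le_eq)
  then have "cmod (cinner (T x) x) / (norm x)\<^sup>2 \<le> max c 0" for x
    by (cases "x = 0") (simp_all add: max.coboundedI1)
  then have "bdd_above (range (\<lambda>x. cmod (cinner (T x) x) / (norm x)\<^sup>2))" by (rule bdd_aboveI2)
  from cSUP_upper[OF UNIV_I this, of 0] show ?thesis by (simp add: numrad_def)
qed

context
  fixes P Q :: "'a::chilbert_space \<Rightarrow> 'a"
  assumes P: "bounded_clinear P" "hermitian P" and Q: "bounded_clinear Q" "hermitian Q"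
begin

lemma bounded_linear_sum_squares: "bounded_linear (\<lambda>x. P (P x) + Q (Q x))"
  using bounded_linear_add[OF bounded_linear_compose bounded_linear_compose]
    bounded_clinear_bounded_linear[OF P(1)] bounded_clinear_bounded_linear[OF Q(1)]
  by blast

lemma norm_sq_add_norm_sq_le:
  "(norm (P x))\<^sup>2 + (norm (Q x))\<^sup>2 \<le> onorm (\<lambda>x. P (P x) + Q (Q x)) * (norm x)\<^sup>2"
proof -
  have "(norm (P x))\<^sup>2 + (norm (Q x))\<^sup>2 = Re (cinner (P (P x) + Q (Q x)) x)"
    by (simp add: cinner_add_left hermitianD[OF P(2), of "P x"] hermitianD[OF Q(2), of "Q x"]
        Re_cinner_self)
  then show ?thesis using Re_cinner_le_onorm[OF bounded_linear_sum_squares] by simp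
qed

lemma numrad_cartesian_sq_le:
  "(numrad (\<lambda>x. P x + scaleC \<i> (Q x)))\<^sup>2 \<le> onorm (\<lambda>x. P (P x) + Q (Q x))"
proof -
  define N where "N = onorm (\<lambda>x. P (P x) + Q (Q x))"
  have N: "0 \<le> N" unfolding N_def by (rule onorm_pos_le[OF bounded_linear_sum_squares])
  have bound: "cmod (cinner (P x + scaleC \<i> (Q x)) x) \<le> sqrt N * (norm x)\<^sup>2" for x
  proof -
    define p where "p = cinner (P x) x"
    define q where "q = cinner (Q x) x"
    have "Im p = 0" "Im q = 0" using hermitian_Im_form P(2) Q(2) by (auto simp: p_def q_def)
    then have "(cmod (cinner (P x + scaleC \<i> (Q x)) x))\<^sup>2 = (Re p)\<^sup>2 + (Re q)\<^sup>2"
      by (simp add: p_def q_def cinner_add_left cinner_scaleC_left cmod_power2)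
    also have "\<dots> \<le> (norm (P x) * norm x)\<^sup>2 + (norm (Q x) * norm x)\<^sup>2"
      using abs_Re_le_cmod[of p] abs_Re_le_cmod[of q] cmod_cinner_le[of "P x" x] cmod_cinner_le[of "Q x" x]
      by (intro add_mono) (simp_all add: p_def q_def flip: abs_le_square_iff)
    also have "\<dots> = ((norm (P x))\<^sup>2 + (norm (Q x))\<^sup>2) * (norm x)\<^sup>2"
      by (simp add: algebra_simps power_mult_distrib)
    also have "\<dots> \<le> N * (norm x)\<^sup>2 * (norm x)\<^sup>2"
      by (rule mult_right_mono[OF norm_sq_add_norm_sq_le[folded N_def]]) simp
    also have "\<dots> = (sqrt N * (norm x)\<^sup>2)\<^sup>2" using N by (simp add: power_mult_distrib power2_eq_square)
    finally show ?thesis by (rule power2_le_imp_le) (simp add: N)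
  qed
  have "numrad (\<lambda>x. P x + scaleC \<i> (Q x)) \<le> sqrt N" by (rule numrad_le[OF _ bound]) (simp add: N)
  from power_mono[OF this numrad_nonneg[OF bound], of 2] show ?thesis using N by (simp add: N_def)
qed

lemma numrad_comp_le: "numrad (P \<circ> Q) \<le> onorm (\<lambda>x. P (P x) + Q (Q x)) / 2"
proof (rule numrad_le)
  show "0 \<le> onorm (\<lambda>x. P (P x) + Q (Q x)) / 2"
    using onorm_pos_le[OF bounded_linear_sum_squares] by simp
  fix x
  have "cmod (cinner ((P \<circ> Q) x) x) = cmod (cinner (Q x) (P x))" by (simp add: hermitianD[OF P(2)])
  also have "\<dots> \<le> norm (Q x) * norm (P x)" by (rule cmod_cinner_le)
  also have "\<dots> \<le> ((norm (P x))\<^sup>2 + (norm (Q x))\<^sup>2) / 2"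
    using sum_squares_bound[of "norm (P x)" "norm (Q x)"] by (simp add: algebra_simps)
  also have "\<dots> \<le> onorm (\<lambda>x. P (P x) + Q (Q x)) / 2 * (norm x)\<^sup>2"
    using norm_sq_add_norm_sq_le[of x] by simp
  finally show "cmod (cinner ((P \<circ> Q) x) x) \<le> onorm (\<lambda>x. P (P x) + Q (Q x)) / 2 * (norm x)\<^sup>2" .
qed

end

theorem mainTheorem2:
  fixes A :: "'a::chilbert_space \<Rightarrow> 'a"
  assumes "bounded_clinear A"
  shows "1/4 * (numrad (\<lambda>x. absop A x + scaleC \<i> (absop (adj A) x)))\<^sup>2
         + 1/8 * onorm (\<lambda>x. absop A (absop A x) + absop (adj A) (absop (adj A) x))
         + 1/4 * numrad (absop A \<circ> absop (adj A))
         \<le> 1/2 * onorm (\<lambda>x. adj A (A x) + A (adj A x))"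
proof -
  have P: "positive_op (absop A)" "absop A \<circ> absop A = adj A \<circ> A"
    using absop[OF assms] by auto
  have Q: "positive_op (absop (adj A))" "absop (adj A) \<circ> absop (adj A) = A \<circ> adj A"
    using absop[OF bounded_clinear_adj[OF assms]] by (auto simp: adj_adj[OF assms])
  have sum_squares: "(\<lambda>x. absop A (absop A x) + absop (adj A) (absop (adj A) x))
      = (\<lambda>x. adj A (A x) + A (adj A x))"
    using P(2) Q(2) by (simp add: fun_eq_iff comp_def)
  have hermitian_pair: "bounded_clinear (absop A)" "hermitian (absop A)"
      "bounded_clinear (absop (adj A))" "hermitian (absop (adj A))"
    using P(1) Q(1) by (auto simp: positive_op_iff)
  show ?thesis
    using numrad_cartesian_sq_le[OF hermitian_pair] numrad_comp_le[OF hermitian_pair]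
    by (simp add: sum_squares)
qed

end
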